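(* Let $q$ be a power of an odd prime $p$, let $G$ be one of $\mathrm{SL}_2(q)$, $\mathrm{GL}_2(q)$, $\mathrm{PSL}_2(q)$, $\mathrm{PGL}_2(q)$, and let $\mathcal{C}$ be a conjugacy class of non-trivial unipotent elements in $G$. Then $K_{\mathcal{C}}$ is irreducible.
   Context: For a finite group $G$ and a subset $\mathcal{C}\subseteq G\setminus\{1\}$ closed under conjugation, the Killing form $K_{\mathcal{C}}$ is the bilinear form on the complex vector space with basis $\mathcal{C}$ given on basis elements by $K_{\mathcal{C}}(a,b)=|C_G(ab)\cap\mathcal{C}|$. $K_{\mathcal{C}}$ is irreducible if the graph with vertex set $\mathcal{C}$, in which distinct $a,b$ are adjacent iff $C_G(ab)\cap\mathcal{C}\neq\emptyset$, is connected, and reducible otherwise. *)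

theory Defs
  imports "HOL-Analysis.Analysis" "HOL-Algebra.Coset"
begin

definition conj_class :: "('g, 'b) monoid_scheme \<Rightarrow> 'g \<Rightarrow> 'g set" where
  "conj_class G g = {inv\<^bsub>G\<^esub> h \<otimes>\<^bsub>G\<^esub> g \<otimes>\<^bsub>G\<^esub> h | h. h \<in> carrier G}"

definition centralizer_of :: "('g, 'b) monoid_scheme \<Rightarrow> 'g \<Rightarrow> 'g set" where
  "centralizer_of G y = {x \<in> carrier G. x \<otimes>\<^bsub>G\<^esub> y = y \<otimes>\<^bsub>G\<^esub> x}"

definition killing_adj :: "('g, 'b) monoid_scheme \<Rightarrow> 'g set \<Rightarrow> ('g \<times> 'g) set" where
  "killing_adj G C = {(a, b). a \<in> C \<and> b \<in> C \<and> a \<noteq> b \<and>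
      centralizer_of G (a \<otimes>\<^bsub>G\<^esub> b) \<inter> C \<noteq> {}}"

definition killing_irreducible :: "('g, 'b) monoid_scheme \<Rightarrow> 'g set \<Rightarrow> bool" where
  "killing_irreducible G C \<longleftrightarrow> (\<forall>a\<in>C. \<forall>b\<in>C. (a, b) \<in> (killing_adj G C)\<^sup>*)"

definition GL2 :: "('a::field ^ 2 ^ 2) monoid" where
  "GL2 = \<lparr>carrier = {A. det A \<noteq> 0}, mult = (**), one = mat 1\<rparr>"

definition SL2 :: "('a::field ^ 2 ^ 2) monoid" where
  "SL2 = \<lparr>carrier = {A. det A = 1}, mult = (**), one = mat 1\<rparr>"

definition Z_GL2 :: "('a::field ^ 2 ^ 2) set" where
  "Z_GL2 = {mat c | c. c \<noteq> 0}"

definition Z_SL2 :: "('a::field ^ 2 ^ 2) set" where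
  "Z_SL2 = {mat c | c. c * c = 1}"

definition PGL2 :: "('a::field ^ 2 ^ 2) set monoid" where
  "PGL2 = GL2 Mod Z_GL2"

definition PSL2 :: "('a::field ^ 2 ^ 2) set monoid" where
  "PSL2 = SL2 Mod Z_SL2"

definition unipotent_mat :: "'a::field ^ 2 ^ 2 \<Rightarrow> bool" where
  "unipotent_mat A \<longleftrightarrow> (\<exists>n. ((\<lambda>B. (A - mat 1) ** B) ^^ n) (mat 1) = 0)"

definition unipotent_coset :: "('a::field ^ 2 ^ 2) set \<Rightarrow> bool" where
  "unipotent_coset X \<longleftrightarrow> (\<exists>A\<in>X. unipotent_mat A)"

end

theory Submission
  imports Defs "HOL-Number_Theory.Residues"
begin

text \<open>
  Every non-trivial unipotent 2x2 matrix over a field is a transvection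
  \<open>T\<^sub>s(w) = I + s w (Jw)\<^sup>T\<close> with \<open>s \<noteq> 0\<close> and \<open>w \<noteq> 0\<close>. In any group G with
  \<open>SL2 \<le> G \<le> GL2\<close> the class of such an element consists of transvections and contains,
  together with \<open>T\<^sub>t(w)\<close>, every \<open>T\<^sub>t(w')\<close> with \<open>w' \<noteq> 0\<close>. Transvections along parallel vectors
  commute, so they are joined in the graph. If w and w' are not parallel, rescale w so that
  \<open>s det(w, w') = 2\<close>; then \<open>T\<^sub>s(w) T\<^sub>s(w') = T\<^sub>s(w + w') - 2I\<close>, which is centralised by the
  class element \<open>T\<^sub>s(w + w')\<close>. This is where odd characteristic is needed. Finally,
  connectivity passes to PSL2 and PGL2, because a surjective homomorphism maps
  conjugacy classes onto conjugacy classes and edges to edges or loops.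
\<close>

definition mat2 :: "'a::field \<Rightarrow> 'a \<Rightarrow> 'a \<Rightarrow> 'a \<Rightarrow> 'a^2^2" where
  "mat2 a b c d = (\<chi> i j. if i = 1 then (if j = 1 then a else b) else (if j = 1 then c else d))"

lemma mat2_nth [simp]:
  "mat2 a b c d $ 1 $ 1 = a" "mat2 a b c d $ 1 $ 2 = b"
  "mat2 a b c d $ 2 $ 1 = c" "mat2 a b c d $ 2 $ 2 = d"
  by (simp_all add: mat2_def)

lemma mat2_cases: obtains a b c d where "A = mat2 a b c d"
proof
  show "A = mat2 (A$1$1) (A$1$2) (A$2$1) (A$2$2)"
    by (simp add: mat2_def vec_eq_iff forall_2)
qed

lemma mat2_eq_iff [simp]: "mat2 a b c d = mat2 a' b' c' d' \<longleftrightarrow> a = a' \<and> b = b' \<and> c = c' \<and> d = d'"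
  by (auto simp: mat2_def vec_eq_iff forall_2)

lemma mat2_mult [simp]:
  "mat2 a b c d ** mat2 a' b' c' d' = mat2 (a*a' + b*c') (a*b' + b*d') (c*a' + d*c') (c*b' + d*d')"
  by (simp add: matrix_matrix_mult_def mat2_def vec_eq_iff forall_2 sum_2)

lemma mat2_diff [simp]: "mat2 a b c d - mat2 a' b' c' d' = mat2 (a - a') (b - b') (c - c') (d - d')"
  by (simp add: mat2_def vec_eq_iff forall_2)

lemma mat2_add [simp]: "mat2 a b c d + mat2 a' b' c' d' = mat2 (a + a') (b + b') (c + c') (d + d')"
  by (simp add: mat2_def vec_eq_iff forall_2)

lemma mat_eq_mat2: "mat x = mat2 x 0 0 x"
  by (simp add: mat2_def vec_eq_iff forall_2 mat_def)

lemma zero_eq_mat2: "0 = mat2 0 0 0 0"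
  by (simp add: mat2_def vec_eq_iff forall_2)

lemma det_mat2 [simp]: "det (mat2 a b c d) = a * d - b * c"
  by (simp add: det_2)

lemma mat_mult_mat: "mat a ** mat b = (mat (a * b) :: 'a::field^2^2)"
  by (simp add: mat_eq_mat2)

lemma det_mat_2x2: "det (mat c :: 'a::field^2^2) = c * c"
  by (simp add: mat_eq_mat2)

lemma mat_mult_commute: "mat c ** A = A ** mat c" for A :: "'a::field^2^2"
proof -
  obtain a b c' d where "A = mat2 a b c' d" by (rule mat2_cases)
  then show ?thesis by (simp add: mat_eq_mat2 algebra_simps)
qed

lemma mult_diff_mat_commute: "A ** (A - mat c) = (A - mat c) ** (A :: 'a::field^2^2)"
proof -
  obtain a b c' d where "A = mat2 a b c' d" by (rule mat2_cases)
  then show ?thesis by (simp add: mat_eq_mat2 algebra_simps)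
qed

lemma det_nonzero_left_invertible:
  fixes A :: "'a::field^2^2"
  assumes "det A \<noteq> 0"
  shows "\<exists>B. B ** A = mat 1"
proof -
  obtain a b c d where A: "A = mat2 a b c d" by (rule mat2_cases)
  define \<delta> where "\<delta> = a*d - b*c"
  have "\<delta> \<noteq> 0" using assms A by (simp add: \<delta>_def)
  have "mat2 d (- b) (- c) a ** A = mat \<delta>"
    by (simp add: A mat_eq_mat2 \<delta>_def algebra_simps)
  then have "(mat (1 / \<delta>) ** mat2 d (- b) (- c) a) ** A = mat (1 / \<delta>) ** mat \<delta>"
    by (simp add: matrix_mul_assoc[symmetric])
  also have "\<dots> = mat 1"
    using \<open>\<delta> \<noteq> 0\<close> by (simp add: mat_eq_mat2)
  finally show ?thesis ..
qed

section \<open>Transvections\<close>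

text \<open>\<open>transvection s p r\<close> is \<open>I + s w (-r, p)\<close> for \<open>w = (p, r)\<^sup>T\<close>, that is, the map
  \<open>v \<mapsto> v + s det(w, v) w\<close>.\<close>

definition transvection :: "'a::field \<Rightarrow> 'a \<Rightarrow> 'a \<Rightarrow> 'a^2^2" where
  "transvection s p r = mat2 (1 - s*p*r) (s*p^2) (- (s*r^2)) (1 + s*p*r)"

lemma det_transvection [simp]: "det (transvection s p r) = 1"
  by (simp add: transvection_def algebra_simps power2_eq_square)

text \<open>The vector \<open>(d*p - b*r, a*r - c*p)\<close> is the adjugate of \<open>mat2 a b c d\<close> applied to \<open>(p, r)\<close>.\<close>

lemma transvection_intertwine:
  "mat2 a b c d ** transvection s (d*p - b*r) (a*r - c*p)
     = transvection (s * (a*d - b*c)) p r ** mat2 a b c d"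
  by (simp add: transvection_def algebra_simps power2_eq_square)

lemma transvection_commute:
  "transvection s p r ** transvection t (m*p) (m*r) = transvection t (m*p) (m*r) ** transvection s p r"
  by (simp add: transvection_def algebra_simps power2_eq_square)

lemma transvection_mult_transvection:
  assumes "s * (p*r' - r*p') = 2"
  shows "transvection s p r ** transvection s p' r' = transvection s (p + p') (r + r') - mat 2"
proof -
  let ?e = "s * (p*r' - r*p') - 2"
  have "transvection s p r ** transvection s p' r' = transvection s (p + p') (r + r') - mat 2 +
      mat2 (- ?e * (1 + s*p*r')) (?e * (s*p*p')) (- ?e * (s*r*r')) (?e * (s*r*p' - 1))"
    unfolding transvection_def mat_eq_mat2 by (simp add: algebra_simps power2_eq_square)
  then show ?thesis
    using assms by (simp flip: zero_eq_mat2)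
qed

lemma adjugate_mult_nonzero:
  assumes "a*d - b*c \<noteq> 0" "(p, r) \<noteq> (0, 0)"
  shows "(d*p - b*r, a*r - c*p) \<noteq> (0 :: 'a::field, 0)"
proof
  assume "(d*p - b*r, a*r - c*p) = (0, 0)"
  moreover have "p * (a*d - b*c) = a*(d*p - b*r) + b*(a*r - c*p)"
    and "r * (a*d - b*c) = c*(d*p - b*r) + d*(a*r - c*p)"
    by (simp_all add: algebra_simps)
  ultimately have "p = 0" "r = 0" using assms(1) by auto
  with assms(2) show False by simp
qed

lemma exists_SL2_first_column:
  assumes "(p, r) \<noteq> (0 :: 'a::field, 0)"
  shows "\<exists>P :: 'a^2^2. det P = 1 \<and> P$1$1 = p \<and> P$2$1 = r"
proof (cases "p = 0")
  case True
  with assms show ?thesis by (intro exI[of _ "mat2 0 (- 1 / r) r 0"]) simp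
next
  case False
  then show ?thesis by (intro exI[of _ "mat2 p 0 r (1 / p)"]) simp
qed

lemma det_iterate_mult: "det (((\<lambda>B. N ** B) ^^ n) (mat 1)) = det N ^ n"
  for N :: "'a::comm_ring_1^'n^'n"
  by (induction n) (simp_all add: det_mul)

lemma iterate_mult_mat2_det_zero:
  assumes "a*d - b*c = 0"
  shows "((\<lambda>B. mat2 a b c d ** B) ^^ Suc n) (mat 1)
    = mat2 ((a+d)^n * a) ((a+d)^n * b) ((a+d)^n * c) ((a+d)^n * d)"
proof (induction n)
  case 0
  then show ?case by (simp add: mat_eq_mat2)
next
  case (Suc n)
  have "b*c = a*d" using assms by simp
  with Suc show ?case by (simp add: algebra_simps)
qed

lemma nilpotent_mat2_trace_det:
  assumes "((\<lambda>B. mat2 a b c d ** B) ^^ n) (mat 1) = 0" "mat2 a b c d \<noteq> 0"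
  shows "a + d = 0" "a*d - b*c = (0 :: 'a::field)"
proof -
  show det: "a*d - b*c = 0"
    using det_iterate_mult[where N = "mat2 a b c d" and n = n] assms(1) by (simp add: zero_eq_mat2)
  show "a + d = 0"
  proof (cases n)
    case 0
    with assms(1) show ?thesis by (simp add: mat_eq_mat2 zero_eq_mat2)
  next
    case (Suc m)
    with assms(1) have "(a+d)^m = 0"
      using iterate_mult_mat2_det_zero[OF det, of m] assms(2) by (auto simp: zero_eq_mat2)
    then show ?thesis by simp
  qed
qed

lemma trace_det_zero_transvection:
  assumes "a + d = 0" "a*d - b*c = 0" "mat2 a b c d \<noteq> (0 :: 'a::field^2^2)"
  shows "\<exists>s p r. s \<noteq> 0 \<and> (p, r) \<noteq> (0, 0) \<and> mat2 (1 + a) b c (1 + d) = transvection s p r"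
proof (cases "b = 0")
  case True
  with assms have "a = 0" "d = 0" "c \<noteq> 0" by (auto simp: zero_eq_mat2)
  with True show ?thesis
    by (intro exI[of _ "- c"] exI[of _ 0] exI[of _ 1]) (simp add: transvection_def)
next
  case False
  have d: "d = - a"
    using assms(1) by (simp add: add_eq_0_iff)
  with assms(2) False have "c = - (a*a) / b"
    by (simp add: field_simps)
  with d False show ?thesis
    by (intro exI[of _ b] exI[of _ 1] exI[of _ "- a / b"])
      (simp add: transvection_def field_simps power2_eq_square)
qed

lemma unipotent_mat_transvection:
  assumes "unipotent_mat g" "g \<noteq> mat 1"
  shows "\<exists>s p r. s \<noteq> 0 \<and> (p, r) \<noteq> (0, 0) \<and> g = transvection s p r"
proof -
  obtain a b c d where N: "g - mat 1 = mat2 a b c d" by (rule mat2_cases)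
  have "g = (g - mat 1) + mat 1"
    by simp
  also have "\<dots> = mat2 (1 + a) b c (1 + d)"
    unfolding N by (simp add: mat_eq_mat2 add.commute)
  finally have g: "g = mat2 (1 + a) b c (1 + d)" .
  have N0: "mat2 a b c d \<noteq> 0"
    using assms(2) N by (metis right_minus_eq)
  obtain n where "((\<lambda>B. mat2 a b c d ** B) ^^ n) (mat 1) = 0"
    using assms(1) N unfolding unipotent_mat_def by auto
  from nilpotent_mat2_trace_det[OF this N0] N0 show ?thesis
    unfolding g by (rule trace_det_zero_transvection)
qed

lemma GL2_simps [simp]:
  "carrier GL2 = {A. det A \<noteq> 0}" "monoid.mult GL2 = (**)" "\<one>\<^bsub>GL2\<^esub> = mat 1"
  by (simp_all add: GL2_def)

lemma SL2_simps [simp]: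
  "carrier SL2 = {A. det A = 1}" "monoid.mult SL2 = (**)" "\<one>\<^bsub>SL2\<^esub> = mat 1"
  by (simp_all add: SL2_def)

lemma group_GL2: "group (GL2 :: ('a::field^2^2) monoid)"
proof (rule groupI)
  fix A :: "'a^2^2" assume "A \<in> carrier GL2"
  then obtain B where B: "B ** A = mat 1"
    using det_nonzero_left_invertible[of A] by auto
  then have "det B * det A = 1"
    by (simp flip: det_mul)
  then have "det B \<noteq> 0"
    by auto
  with B show "\<exists>B\<in>carrier GL2. B \<otimes>\<^bsub>GL2\<^esub> A = \<one>\<^bsub>GL2\<^esub>"
    by (intro bexI[of _ B]) simp_all
qed (simp_all add: det_mul matrix_mul_assoc[symmetric])

lemma group_SL2: "group (SL2 :: ('a::field^2^2) monoid)"
proof (rule groupI)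
  fix A :: "'a^2^2" assume "A \<in> carrier SL2"
  then obtain B where B: "B ** A = mat 1"
    using det_nonzero_left_invertible[of A] by auto
  then have "det B * det A = 1"
    by (simp flip: det_mul)
  then have "det B = 1"
    using \<open>A \<in> carrier SL2\<close> by simp
  with B show "\<exists>B\<in>carrier SL2. B \<otimes>\<^bsub>SL2\<^esub> A = \<one>\<^bsub>SL2\<^esub>"
    by (intro bexI[of _ B]) simp_all
qed (simp_all add: det_mul matrix_mul_assoc[symmetric])

lemma (in group) central_subgroup_normal:
  assumes "subgroup H G" and "\<And>h x. h \<in> H \<Longrightarrow> x \<in> carrier G \<Longrightarrow> h \<otimes> x = x \<otimes> h"
  shows "H \<lhd> G"
proof (rule normal_invI[OF assms(1)])
  fix x h assume "x \<in> carrier G" "h \<in> H"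
  moreover have "h \<in> carrier G" using assms(1) \<open>h \<in> H\<close> by (rule subgroup.mem_carrier)
  ultimately have "x \<otimes> h \<otimes> inv x = h \<otimes> x \<otimes> inv x"
    using assms(2)[of h x] by simp
  also have "\<dots> = h \<otimes> (x \<otimes> inv x)"
    using \<open>x \<in> carrier G\<close> \<open>h \<in> carrier G\<close> by (simp add: m_assoc)
  also have "\<dots> = h"
    using \<open>x \<in> carrier G\<close> \<open>h \<in> carrier G\<close> by simp
  finally show "x \<otimes> h \<otimes> inv x \<in> H"
    using \<open>h \<in> H\<close> by simp
qed

lemma Z_GL2_normal: "Z_GL2 \<lhd> (GL2 :: ('a::field^2^2) monoid)"
proof (rule group.central_subgroup_normal[OF group_GL2])
  show "subgroup Z_GL2 (GL2 :: ('a^2^2) monoid)"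
  proof (rule group.subgroupI[OF group_GL2])
    show "Z_GL2 \<subseteq> carrier (GL2 :: ('a^2^2) monoid)"
      by (auto simp: Z_GL2_def det_mat_2x2)
    show "Z_GL2 \<noteq> {}"
      unfolding Z_GL2_def by (auto intro: exI[of _ 1])
    show "inv\<^bsub>GL2\<^esub> A \<in> Z_GL2" if A: "A \<in> Z_GL2" for A :: "'a^2^2"
    proof -
      obtain c where c: "A = mat c" "c \<noteq> 0" using A by (auto simp: Z_GL2_def)
      then have "inv\<^bsub>GL2\<^esub> A = mat (1 / c)"
        by (intro group.inv_equality[OF group_GL2]) (simp_all add: mat_mult_mat det_mat_2x2)
      then show ?thesis using c by (auto simp: Z_GL2_def)
    qed
    show "A \<otimes>\<^bsub>GL2\<^esub> B \<in> Z_GL2" if "A \<in> Z_GL2" "B \<in> Z_GL2" for A B :: "'a^2^2"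
      using that by (auto simp: Z_GL2_def mat_mult_mat)
  qed
  show "h \<otimes>\<^bsub>GL2\<^esub> A = A \<otimes>\<^bsub>GL2\<^esub> h" if "h \<in> Z_GL2" for h A :: "'a^2^2"
    using that by (auto simp: Z_GL2_def mat_mult_commute)
qed

lemma Z_SL2_normal: "Z_SL2 \<lhd> (SL2 :: ('a::field^2^2) monoid)"
proof (rule group.central_subgroup_normal[OF group_SL2])
  show "subgroup Z_SL2 (SL2 :: ('a^2^2) monoid)"
  proof (rule group.subgroupI[OF group_SL2])
    show "Z_SL2 \<subseteq> carrier (SL2 :: ('a^2^2) monoid)"
      by (auto simp: Z_SL2_def det_mat_2x2)
    show "Z_SL2 \<noteq> {}"
      unfolding Z_SL2_def by (auto intro: exI[of _ 1])
    show "inv\<^bsub>SL2\<^esub> A \<in> Z_SL2" if A: "A \<in> Z_SL2" for A :: "'a^2^2"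
    proof -
      obtain c where c: "A = mat c" "c * c = 1" using A by (auto simp: Z_SL2_def)
      then have "inv\<^bsub>SL2\<^esub> A = A"
        by (intro group.inv_equality[OF group_SL2]) (simp_all add: mat_mult_mat det_mat_2x2)
      then show ?thesis using A by simp
    qed
    show "A \<otimes>\<^bsub>SL2\<^esub> B \<in> Z_SL2" if "A \<in> Z_SL2" "B \<in> Z_SL2" for A B :: "'a^2^2"
      using that by (auto simp: Z_SL2_def mat_mult_mat mult_ac)
  qed
  show "h \<otimes>\<^bsub>SL2\<^esub> A = A \<otimes>\<^bsub>SL2\<^esub> h" if "h \<in> Z_SL2" for h A :: "'a^2^2"
    using that by (auto simp: Z_SL2_def mat_mult_commute)
qed

section \<open>Killing graphs of conjugacy classes\<close>

lemma killing_adj_rtranclI: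
  assumes "x \<in> C" "y \<in> C" "c \<in> C" "c \<in> carrier G"
    and "c \<otimes>\<^bsub>G\<^esub> (x \<otimes>\<^bsub>G\<^esub> y) = (x \<otimes>\<^bsub>G\<^esub> y) \<otimes>\<^bsub>G\<^esub> c"
  shows "(x, y) \<in> (killing_adj G C)\<^sup>*"
proof (cases "x = y")
  case False
  with assms have "(x, y) \<in> killing_adj G C"
    unfolding killing_adj_def centralizer_of_def by blast
  then show ?thesis ..
qed simp

lemma (in monoid) killing_adj_rtrancl_if_commute:
  assumes "C \<subseteq> carrier G" "x \<in> C" "y \<in> C" "x \<otimes> y = y \<otimes> x"
  shows "(x, y) \<in> (killing_adj G C)\<^sup>*"
proof (rule killing_adj_rtranclI[of x C y x])
  have "x \<in> carrier G" "y \<in> carrier G" using assms by auto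
  then show "x \<otimes> (x \<otimes> y) = x \<otimes> y \<otimes> x"
    by (simp add: m_assoc assms(4)[symmetric])
qed (use assms in auto)

lemma (in group) conj_class_subset_carrier:
  "g \<in> carrier G \<Longrightarrow> conj_class G g \<subseteq> carrier G"
  unfolding conj_class_def by auto

lemma (in group) conj_mem_conj_class:
  assumes "g \<in> carrier G" "x \<in> conj_class G g" "h \<in> carrier G"
  shows "inv h \<otimes> x \<otimes> h \<in> conj_class G g"
proof -
  obtain k where k: "k \<in> carrier G" "x = inv k \<otimes> g \<otimes> k"
    using assms(2) unfolding conj_class_def by blast
  then have "inv h \<otimes> x \<otimes> h = inv (k \<otimes> h) \<otimes> g \<otimes> (k \<otimes> h)"
    using assms(1,3) by (simp add: inv_mult_group m_assoc)
  then show ?thesis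
    using k(1) assms(3) unfolding conj_class_def by blast
qed

lemma (in group) conj_eqI:
  assumes "h \<in> carrier G" "x \<in> carrier G" "y \<in> carrier G" "x \<otimes> h = h \<otimes> y"
  shows "inv h \<otimes> x \<otimes> h = y"
  using assms by (simp add: m_assoc inv_solve_left')

lemma (in group) conj_mem_conj_class_iff:
  assumes "g \<in> carrier G" "x \<in> carrier G" "h \<in> carrier G"
  shows "inv h \<otimes> x \<otimes> h \<in> conj_class G g \<longleftrightarrow> x \<in> conj_class G g"
proof
  assume "inv h \<otimes> x \<otimes> h \<in> conj_class G g"
  then have "inv (inv h) \<otimes> (inv h \<otimes> x \<otimes> h) \<otimes> inv h \<in> conj_class G g"
    using assms conj_mem_conj_class[of g "inv h \<otimes> x \<otimes> h" "inv h"] by simp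
  moreover have "inv (inv h) \<otimes> (inv h \<otimes> x \<otimes> h) \<otimes> inv h = x"
    using assms by (intro conj_eqI) (simp_all add: m_assoc)
  ultimately show "x \<in> conj_class G g"
    by simp
qed (use assms conj_mem_conj_class in blast)

lemma conj_class_hom_image:
  fixes G (structure)
  assumes "group_hom G H f" "f ` carrier G = carrier H" "g \<in> carrier G"
  shows "conj_class H (f g) = f ` conj_class G g"
proof -
  interpret group_hom G H f by (rule assms(1))
  have "conj_class H (f g) = (\<lambda>h. inv\<^bsub>H\<^esub> (f h) \<otimes>\<^bsub>H\<^esub> f g \<otimes>\<^bsub>H\<^esub> f h) ` carrier G"
    unfolding conj_class_def assms(2)[symmetric] by blast
  also have "\<dots> = (\<lambda>h. f (inv h \<otimes> g \<otimes> h)) ` carrier G"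
    using assms(3) by (intro image_cong) simp_all
  also have "\<dots> = f ` conj_class G g"
    unfolding conj_class_def by blast
  finally show ?thesis .
qed

lemma killing_irreducible_hom_image:
  fixes G (structure)
  assumes f: "group_hom G H f" "f ` carrier G = carrier H" and g: "g \<in> carrier G"
    and irr: "killing_irreducible G (conj_class G g)"
  shows "killing_irreducible H (conj_class H (f g))"
proof -
  interpret group_hom G H f by (rule f(1))
  let ?C = "conj_class G g"
  have C: "?C \<subseteq> carrier G" using g by (rule G.conj_class_subset_carrier)
  have edge: "(f u, f v) \<in> (killing_adj H (f ` ?C))\<^sup>*" if uv: "(u, v) \<in> killing_adj G ?C" for u v
  proof -
    obtain c where uvc: "u \<in> ?C" "v \<in> ?C" "c \<in> ?C" "c \<otimes> (u \<otimes> v) = u \<otimes> v \<otimes> c"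
      using uv unfolding killing_adj_def centralizer_of_def by blast
    have uvc_carrier: "u \<in> carrier G" "v \<in> carrier G" "c \<in> carrier G"
      using uvc(1-3) C by auto
    then have "f c \<otimes>\<^bsub>H\<^esub> (f u \<otimes>\<^bsub>H\<^esub> f v) = f (c \<otimes> (u \<otimes> v))"
      by simp
    also have "\<dots> = f (u \<otimes> v \<otimes> c)"
      by (simp only: uvc(4))
    also have "\<dots> = f u \<otimes>\<^bsub>H\<^esub> f v \<otimes>\<^bsub>H\<^esub> f c"
      using uvc_carrier by simp
    finally have "f c \<otimes>\<^bsub>H\<^esub> (f u \<otimes>\<^bsub>H\<^esub> f v) = f u \<otimes>\<^bsub>H\<^esub> f v \<otimes>\<^bsub>H\<^esub> f c" .
    moreover have "f u \<in> f ` ?C" "f v \<in> f ` ?C" "f c \<in> f ` ?C" "f c \<in> carrier H"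
      using uvc(1-3) uvc_carrier(3) by simp_all
    ultimately show ?thesis
      by (intro killing_adj_rtranclI)
  qed
  have "(f a, f b) \<in> (killing_adj H (f ` ?C))\<^sup>*" if "(a, b) \<in> (killing_adj G ?C)\<^sup>*" for a b
    using that
  proof (induction rule: rtrancl_induct)
    case (step v w)
    from step.IH edge[OF step.hyps(2)] show ?case
      by (rule rtrancl_trans)
  qed simp
  with irr show ?thesis
    unfolding killing_irreducible_def conj_class_hom_image[OF f g] by blast
qed

lemma killing_irreducible_FactGroupI:
  fixes G (structure)
  assumes N: "N \<lhd> G" and X: "X \<in> carrier (G Mod N)" "X \<noteq> \<one>\<^bsub>G Mod N\<^esub>" "A \<in> X"
    and irr: "A \<noteq> \<one>\<^bsub>G\<^esub> \<Longrightarrow> killing_irreducible G (conj_class G A)"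
  shows "killing_irreducible (G Mod N) (conj_class (G Mod N) X)"
proof -
  interpret normal N G by (rule N)
  obtain h where h: "h \<in> carrier G" "X = N #> h"
    using X(1) by (auto simp: carrier_FactGroup)
  then have A: "A \<in> carrier G" "X = N #> A"
    using X(3) r_coset_subset_G[OF subset h(1)] repr_independence[OF _ h(1) subgroup_axioms] by auto
  then have "A \<noteq> \<one>\<^bsub>G\<^esub>"
    using X(2) coset_mult_one[OF subset] by auto
  have "group_hom G (G Mod N) ((#>) N)"
    by (intro group_hom.intro group_hom_axioms.intro is_group factorgroup_is_group r_coset_hom_Mod)
  moreover have "(#>) N ` carrier G = carrier (G Mod N)"
    by (simp add: carrier_FactGroup)
  ultimately show ?thesis
    unfolding A(2) using A(1) irr[OF \<open>A \<noteq> \<one>\<^bsub>G\<^esub>\<close>] by (rule killing_irreducible_hom_image)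
qed

section \<open>Groups between SL2 and GL2\<close>

locale SL2_supergroup = group G for G :: "('a::field^2^2) monoid" (structure) +
  assumes mult_eq: "monoid.mult G = (**)"
    and one_eq [simp]: "\<one>\<^bsub>G\<^esub> = mat 1"
    and SL2_subset: "carrier SL2 \<subseteq> carrier G"
begin

lemma det_nonzero: "h \<in> carrier G \<Longrightarrow> det h \<noteq> 0"
  using l_inv[of h] det_mul[of "inv h" h] by (auto simp: mult_eq)

lemma transvection_in_carrier [simp]: "transvection s p r \<in> carrier G"
  using SL2_subset by auto

lemma conj_transvection:
  assumes "h \<in> carrier G"
  shows "inv h \<otimes> transvection s p r \<otimes> h
    = transvection (s / det h) (h$2$2*p - h$1$2*r) (h$1$1*r - h$2$1*p)"
proof -
  obtain a b c d where h: "h = mat2 a b c d" by (rule mat2_cases)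
  have "transvection s p r \<otimes> h = h \<otimes> transvection (s / det h) (h$2$2*p - h$1$2*r) (h$1$1*r - h$2$1*p)"
    using transvection_intertwine[of a b c d "s / det h" p r] det_nonzero[OF assms] by (simp add: h mult_eq)
  then show ?thesis
    using assms by (intro conj_eqI) simp_all
qed

lemma conj_class_transvection_subset:
  assumes "s \<noteq> 0" "(p, r) \<noteq> (0, 0)"
  shows "conj_class G (transvection s p r)
    \<subseteq> {transvection t p' r' | t p' r'. t \<noteq> 0 \<and> (p', r') \<noteq> (0, 0)}"
proof
  fix x assume "x \<in> conj_class G (transvection s p r)"
  then obtain h where h: "h \<in> carrier G" "x = inv h \<otimes> transvection s p r \<otimes> h"
    unfolding conj_class_def by blast
  have "det h \<noteq> 0" using det_nonzero[OF h(1)] .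
  then have "(h$2$2*p - h$1$2*r, h$1$1*r - h$2$1*p) \<noteq> (0, 0)"
    using adjugate_mult_nonzero[OF _ assms(2)] by (simp add: det_2)
  moreover have "s / det h \<noteq> 0"
    using \<open>det h \<noteq> 0\<close> assms(1) by simp
  ultimately show "x \<in> {transvection t p' r' | t p' r'. t \<noteq> 0 \<and> (p', r') \<noteq> (0, 0)}"
    unfolding h(2) conj_transvection[OF h(1)] by blast
qed

lemma conj_transvection_to_basis:
  assumes "(p, r) \<noteq> (0, 0)"
  obtains P where "P \<in> carrier G" "inv P \<otimes> transvection t p r \<otimes> P = transvection t 1 0"
proof -
  obtain P :: "'a^2^2" where P: "det P = 1" "P$1$1 = p" "P$2$1 = r"
    using exists_SL2_first_column[OF assms] by blast
  have "P \<in> carrier G" using P(1) SL2_subset by auto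
  moreover have "P$2$2*p - P$1$2*r = 1" "P$1$1*r - P$2$1*p = 0"
    using P by (simp_all add: det_2 mult.commute)
  ultimately show ?thesis
    using that P(1) by (simp add: conj_transvection)
qed

lemma transvection_mem_conj_class:
  assumes "g \<in> carrier G" "transvection t p r \<in> conj_class G g"
    and "(p, r) \<noteq> (0, 0)" "(p', r') \<noteq> (0, 0)"
  shows "transvection t p' r' \<in> conj_class G g"
proof -
  obtain P where "P \<in> carrier G" "inv P \<otimes> transvection t p r \<otimes> P = transvection t 1 0"
    using conj_transvection_to_basis[OF assms(3)] .
  then have basis: "transvection t 1 0 \<in> conj_class G g"
    using assms(1,2) conj_mem_conj_class by metis
  obtain Q where "Q \<in> carrier G" "inv Q \<otimes> transvection t p' r' \<otimes> Q = transvection t 1 0"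
    using conj_transvection_to_basis[OF assms(4)] .
  with basis show ?thesis
    using assms(1) conj_mem_conj_class_iff[of g "transvection t p' r'" Q] by simp
qed

text \<open>Transvections along parallel vectors commute. Otherwise \<open>w = (p, r)\<close> is rescaled to
  \<open>l w\<close> with \<open>s det(l w, w') = 2\<close>; then \<open>T(l w) T(w') = T(l w + w') - 2I\<close> is centralised
  by \<open>T(l w + w') \<in> C\<close>.\<close>

lemma transvection_path:
  assumes "(2 :: 'a) \<noteq> 0" "s \<noteq> 0" "C \<subseteq> carrier G"
    and C: "\<And>p r. (p, r) \<noteq> (0, 0) \<Longrightarrow> transvection s p r \<in> C"
    and pr: "(p, r) \<noteq> (0, 0)" "(p', r') \<noteq> (0, 0)"
  shows "(transvection s p r, transvection s p' r') \<in> (killing_adj G C)\<^sup>*"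
proof (cases "p*r' - r*p' = 0")
  case True
  obtain m where m: "p' = m*p" "r' = m*r"
  proof (cases "p = 0")
    case True
    with pr(1) \<open>p*r' - r*p' = 0\<close> have "r \<noteq> 0" "p' = 0" by auto
    with True show ?thesis using that[of "r' / r"] by simp
  next
    case False
    with \<open>p*r' - r*p' = 0\<close> show ?thesis using that[of "p' / p"] by (simp add: field_simps)
  qed
  show ?thesis
  proof (rule killing_adj_rtrancl_if_commute)
    show "transvection s p r \<otimes> transvection s p' r' = transvection s p' r' \<otimes> transvection s p r"
      unfolding mult_eq m by (rule transvection_commute)
  qed (use \<open>C \<subseteq> carrier G\<close> C[OF pr(1)] C[OF pr(2)] in auto)
next
  case False
  define d where "d = p*r' - r*p'"
  define l where "l = 2 / (s * d)"
  have "d \<noteq> 0" using False by (simp add: d_def)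
  then have "l \<noteq> 0" using assms(1,2) by (simp add: l_def)
  then have lpr: "(l*p, l*r) \<noteq> (0, 0)" using pr(1) by simp
  have sum: "(l*p + p', l*r + r') \<noteq> (0, 0)"
  proof
    assume "(l*p + p', l*r + r') = (0, 0)"
    then have "p' = - (l*p)" "r' = - (l*r)" by (simp_all add: eq_neg_iff_add_eq_0 add.commute)
    with \<open>d \<noteq> 0\<close> show False by (simp add: d_def algebra_simps)
  qed
  have "(transvection s p r, transvection s (l*p) (l*r)) \<in> (killing_adj G C)\<^sup>*"
  proof (rule killing_adj_rtrancl_if_commute)
    show "transvection s p r \<otimes> transvection s (l*p) (l*r) = transvection s (l*p) (l*r) \<otimes> transvection s p r"
      unfolding mult_eq by (rule transvection_commute)
  qed (use \<open>C \<subseteq> carrier G\<close> C[OF pr(1)] C[OF lpr] in auto)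
  also have "(transvection s (l*p) (l*r), transvection s p' r') \<in> (killing_adj G C)\<^sup>*"
  proof (rule killing_adj_rtranclI)
    have "s * ((l*p)*r' - (l*r)*p') = s * l * d"
      by (simp add: d_def algebra_simps)
    also have "\<dots> = 2"
      using \<open>d \<noteq> 0\<close> assms(2) by (simp add: l_def)
    finally have "s * ((l*p)*r' - (l*r)*p') = 2" .
    then show "transvection s (l*p + p') (l*r + r') \<otimes> (transvection s (l*p) (l*r) \<otimes> transvection s p' r')
      = transvection s (l*p) (l*r) \<otimes> transvection s p' r' \<otimes> transvection s (l*p + p') (l*r + r')"
      unfolding mult_eq by (simp only: transvection_mult_transvection mult_diff_mat_commute)
  qed (use \<open>C \<subseteq> carrier G\<close> C[OF lpr] C[OF pr(2)] C[OF sum] in auto)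
  finally show ?thesis .
qed

lemma killing_irreducible_transvection_class:
  assumes "(2 :: 'a) \<noteq> 0" "s \<noteq> 0" "(p, r) \<noteq> (0, 0)"
  shows "killing_irreducible G (conj_class G (transvection s p r))"
  unfolding killing_irreducible_def
proof (intro ballI)
  let ?C = "conj_class G (transvection s p r)"
  have C: "?C \<subseteq> carrier G"
    by (simp add: conj_class_subset_carrier)
  fix x y assume "x \<in> ?C" "y \<in> ?C"
  obtain t q u where x: "x = transvection t q u" "t \<noteq> 0" "(q, u) \<noteq> (0, 0)"
    using conj_class_transvection_subset[OF assms(2,3)] \<open>x \<in> ?C\<close> by blast
  obtain t' q' u' where y: "y = transvection t' q' u'" "(q', u') \<noteq> (0, 0)"
    using conj_class_transvection_subset[OF assms(2,3)] \<open>y \<in> ?C\<close> by blast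
  have all_t: "transvection t q'' u'' \<in> ?C" if "(q'', u'') \<noteq> (0, 0)" for q'' u''
    using \<open>x \<in> ?C\<close> x(3) that unfolding x(1) by (rule transvection_mem_conj_class[rotated]) simp
  have "(x, transvection t q' u') \<in> (killing_adj G ?C)\<^sup>*"
    unfolding x(1) using assms(1) x(2) C all_t x(3) y(2) by (rule transvection_path)
  also have "(transvection t q' u', y) \<in> (killing_adj G ?C)\<^sup>*"
  proof (rule killing_adj_rtrancl_if_commute)
    show "transvection t q' u' \<otimes> y = y \<otimes> transvection t q' u'"
      using transvection_commute[of t q' u' t' 1] by (simp add: mult_eq y(1))
  qed (use C all_t[OF y(2)] \<open>y \<in> ?C\<close> in auto)
  finally show "(x, y) \<in> (killing_adj G ?C)\<^sup>*" .
qed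

lemma killing_irreducible_unipotent_class:
  assumes "(2 :: 'a) \<noteq> 0" "unipotent_mat g" "g \<noteq> mat 1"
  shows "killing_irreducible G (conj_class G g)"
proof -
  obtain s p r where "s \<noteq> 0" "(p, r) \<noteq> (0, 0)" "g = transvection s p r"
    using unipotent_mat_transvection[OF assms(2,3)] by blast
  then show ?thesis
    using killing_irreducible_transvection_class[OF assms(1)] by simp
qed

end

lemma SL2_supergroup_SL2: "SL2_supergroup (SL2 :: ('a::field^2^2) monoid)"
  by (intro SL2_supergroup.intro SL2_supergroup_axioms.intro group_SL2) simp_all

lemma SL2_supergroup_GL2: "SL2_supergroup (GL2 :: ('a::field^2^2) monoid)"
  by (intro SL2_supergroup.intro SL2_supergroup_axioms.intro group_GL2) auto

lemma two_neq_zero_if_odd_card: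
  assumes "odd (card (UNIV :: 'a::ring_1 set))"
  shows "(2 :: 'a) \<noteq> 0"
proof
  assume two: "(2 :: 'a) = 0"
  obtain m where m: "card (UNIV :: 'a set) = 2 * m + 1"
    using assms oddE by blast
  have "(of_nat (card (UNIV :: 'a set)) :: 'a) = 0"
    by (simp add: of_nat_eq_0_iff_char_dvd CHAR_dvd_CARD)
  moreover have "(of_nat (2 * m + 1) :: 'a) = 1"
    using two by simp
  ultimately show False
    using m by simp
qed

theorem corollary3p5:
  fixes p k :: nat
  assumes "prime p" and "odd p" and "k \<ge> 1" and "CARD('a::{field,finite}) = p ^ k"
  shows "(\<forall>g \<in> carrier (SL2 :: ('a ^ 2 ^ 2) monoid). unipotent_mat g \<and> g \<noteq> \<one>\<^bsub>SL2\<^esub> \<longrightarrow>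
            killing_irreducible SL2 (conj_class SL2 g))
       \<and> (\<forall>g \<in> carrier (GL2 :: ('a ^ 2 ^ 2) monoid). unipotent_mat g \<and> g \<noteq> \<one>\<^bsub>GL2\<^esub> \<longrightarrow>
            killing_irreducible GL2 (conj_class GL2 g))
       \<and> (\<forall>X \<in> carrier (PSL2 :: ('a ^ 2 ^ 2) set monoid). unipotent_coset X \<and> X \<noteq> \<one>\<^bsub>PSL2\<^esub> \<longrightarrow>
            killing_irreducible PSL2 (conj_class PSL2 X))
       \<and> (\<forall>X \<in> carrier (PGL2 :: ('a ^ 2 ^ 2) set monoid). unipotent_coset X \<and> X \<noteq> \<one>\<^bsub>PGL2\<^esub> \<longrightarrow>
            killing_irreducible PGL2 (conj_class PGL2 X))"
proof -
  have two: "(2 :: 'a) \<noteq> 0"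
    using assms(2,4) by (intro two_neq_zero_if_odd_card) simp
  have SL: "killing_irreducible SL2 (conj_class SL2 g)" if "unipotent_mat g" "g \<noteq> mat 1" for g :: "'a^2^2"
    using SL2_supergroup.killing_irreducible_unipotent_class[OF SL2_supergroup_SL2 two that] .
  have GL: "killing_irreducible GL2 (conj_class GL2 g)" if "unipotent_mat g" "g \<noteq> mat 1" for g :: "'a^2^2"
    using SL2_supergroup.killing_irreducible_unipotent_class[OF SL2_supergroup_GL2 two that] .
  have PSL: "killing_irreducible PSL2 (conj_class PSL2 X)"
    if "X \<in> carrier PSL2" "X \<noteq> \<one>\<^bsub>PSL2\<^esub>" "A \<in> X" "unipotent_mat A" for X :: "('a^2^2) set" and A
    using that unfolding PSL2_def by (intro killing_irreducible_FactGroupI[OF Z_SL2_normal _ _ _ SL]) simp_all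
  have PGL: "killing_irreducible PGL2 (conj_class PGL2 X)"
    if "X \<in> carrier PGL2" "X \<noteq> \<one>\<^bsub>PGL2\<^esub>" "A \<in> X" "unipotent_mat A" for X :: "('a^2^2) set" and A
    using that unfolding PGL2_def by (intro killing_irreducible_FactGroupI[OF Z_GL2_normal _ _ _ GL]) simp_all
  show ?thesis
    unfolding unipotent_coset_def SL2_simps(3) GL2_simps(3) using SL GL PSL PGL by blast
qed

end
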